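(* Let $R$ be an associative ring with identity $1$ and an involution $*$, let $p,q\in R$ be projections, and put $\overline{p}=1-p$, $\overline{q}=1-q$. If $p\overline{q}$ and $\overline{p}q$ are both MP invertible, then $p-q$ is MP invertible and $$(p-q)^{\dagger}=\overline{q}(p\overline{q}p)^{\dagger}-q(\overline{p}q\overline{p})^{\dagger}.$$
   Context: An involution on $R$ is a map $a\mapsto a^*$ with $(a^* )^*=a$, $(a+b)^*=a^*+b^*$, $(ab)^*=b^*a^*$. An element $a$ is MP invertible if there is $b$ with $aba=a$, $bab=b$, $(ab)^*=ab$, $(ba)^*=ba$; this $b$ is unique and written $a^{\dagger}$. A projection is an element $p$ with $p^2=p=p^*$. (Under the hypothesis, $p\overline{q}p$ and $\overline{p}q\overline{p}$ are MP invertible, so the formula makes sense.) *)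

theory Defs
  imports Main
begin

definition involution :: "('a::ring_1 \<Rightarrow> 'a) \<Rightarrow> bool" where
  "involution s \<longleftrightarrow> (\<forall>a. s (s a) = a) \<and> (\<forall>a b. s (a + b) = s a + s b)
     \<and> (\<forall>a b. s (a * b) = s b * s a)"

definition is_MP_inverse :: "('a::ring_1 \<Rightarrow> 'a) \<Rightarrow> 'a \<Rightarrow> 'a \<Rightarrow> bool" where
  "is_MP_inverse s a b \<longleftrightarrow> a * b * a = a \<and> b * a * b = b \<and> s (a * b) = a * b \<and> s (b * a) = b * a"

definition MP_invertible :: "('a::ring_1 \<Rightarrow> 'a) \<Rightarrow> 'a \<Rightarrow> bool" where
  "MP_invertible s a \<longleftrightarrow> (\<exists>b. is_MP_inverse s a b)"

definition MP_inv :: "('a::ring_1 \<Rightarrow> 'a) \<Rightarrow> 'a \<Rightarrow> 'a" where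
  "MP_inv s a = (THE b. is_MP_inverse s a b)"

definition projection :: "('a::ring_1 \<Rightarrow> 'a) \<Rightarrow> 'a \<Rightarrow> bool" where
  "projection s p \<longleftrightarrow> p * p = p \<and> s p = p"

end

(* Write p - q = a - b with a = p(1 - q) and b = (1 - p)q. Since a^* b = 0 and b a^* = 0, the MP
   inverse of a - b is a^dagger - b^dagger. For a product ef of projections, efe = (ef)(ef)^*, whose
   MP inverse is ((ef)^dagger)^* (ef)^dagger; left multiplication by f recovers (ef)^dagger, so
   (ef)^dagger = f (efe)^dagger, which turns a^dagger - b^dagger into the stated formula. *)
theory Submission
  imports Defs
begin

lemma involution_involutive: "involution s \<Longrightarrow> s (s x) = x"
  and involution_add: "involution s \<Longrightarrow> s (x + y) = s x + s y"
  and involution_mult: "involution s \<Longrightarrow> s (x * y) = s y * s x"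
  by (simp_all add: involution_def)

lemma involution_zero: "involution s \<Longrightarrow> s 0 = 0"
  using involution_add[of s 0 0] by simp

lemma involution_uminus: "involution s \<Longrightarrow> s (- x) = - s x"
  using involution_add[of s x "- x"] involution_zero[of s]
  by (simp add: eq_neg_iff_add_eq_0 add.commute)

lemma involution_diff: "involution s \<Longrightarrow> s (x - y) = s x - s y"
  using involution_add[of s x "- y"] involution_uminus[of s y] by simp

lemma involution_one: "involution s \<Longrightarrow> s 1 = 1"
  using involution_mult[of s "s 1" 1] involution_involutive[of s] by simp

lemma projection_complement:
  assumes "involution s" "projection s p"
  shows "projection s (1 - p)"
  using assms by (simp add: projection_def involution_diff involution_one algebra_simps)

lemma projection_mult_complement:
  assumes "projection s p"
  shows "p * ((1 - p) * x) = 0" "(1 - p) * (p * x) = 0"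
  using assms by (simp_all add: projection_def algebra_simps flip: mult.assoc)

lemma MP_inverse_eq_star_mult:
  assumes "involution s" "is_MP_inverse s a b"
  shows "b = s a * s b * b" "b = b * s b * s a" "s b = a * b * s b"
proof -
  have ba: "b * a = s a * s b" and ab: "a * b = s b * s a"
    using assms by (simp_all add: is_MP_inverse_def involution_mult)
  have bab: "b * a * b = b"
    using assms(2) by (simp add: is_MP_inverse_def)
  show "b = s a * s b * b"
    using bab by (simp only: ba)
  show "b = b * s b * s a"
    using bab by (simp only: mult.assoc ab)
  have "s b = s (b * a * b)" by (simp only: bab)
  also have "\<dots> = (s b * s a) * s b"
    using assms(1) by (simp add: involution_mult mult.assoc)
  also have "\<dots> = a * b * s b"
    by (simp only: ab)
  finally show "s b = a * b * s b" .
qed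

lemma MP_inverse_star:
  assumes inv: "involution s" and b: "is_MP_inverse s a b"
  shows "is_MP_inverse s (s a) (s b)"
proof -
  have "s a * s b * s a = s (a * b * a)" "s b * s a * s b = s (b * a * b)"
    "s b * s a = s (a * b)" "s a * s b = s (b * a)"
    using inv by (simp_all add: involution_mult mult.assoc)
  with b show ?thesis
    by (simp add: is_MP_inverse_def involution_mult involution_involutive[OF inv])
qed

lemma MP_inverse_unique:
  assumes inv: "involution s" and b: "is_MP_inverse s a b" and c: "is_MP_inverse s a c"
  shows "b = c"
proof -
  txt \<open>Both b and c equal b a c.\<close>
  have sa_b: "s a = s a * s b * s a" and sa_c: "s a = s a * s c * s a"
    using MP_inverse_star[OF inv b] MP_inverse_star[OF inv c] by (simp_all add: is_MP_inverse_def)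
  have ac: "s c * s a = a * c" and ba: "s a * s b = b * a"
    using b c inv by (simp_all add: is_MP_inverse_def involution_mult)
  have "b = b * s b * s a"
    by (rule MP_inverse_eq_star_mult(2)[OF inv b])
  also have "\<dots> = b * s b * s a * (s c * s a)"
    using sa_c by (metis mult.assoc)
  also have "\<dots> = b * a * c"
    using MP_inverse_eq_star_mult(2)[OF inv b] by (simp add: ac mult.assoc)
  also have "\<dots> = s a * s b * (s a * s c * c)"
    using MP_inverse_eq_star_mult(1)[OF inv c] by (simp add: ba)
  also have "\<dots> = c"
    using MP_inverse_eq_star_mult(1)[OF inv c] sa_b by (metis mult.assoc)
  finally show "b = c" .
qed

lemma MP_inv_eqI:
  assumes "involution s" "is_MP_inverse s a b"
  shows "MP_inv s a = b"
  unfolding MP_inv_def using assms MP_inverse_unique by blast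

lemma is_MP_inverse_MP_inv:
  assumes "involution s" "MP_invertible s a"
  shows "is_MP_inverse s a (MP_inv s a)"
  using assms MP_inv_eqI unfolding MP_invertible_def by metis

lemma MP_inverse_mult_star:
  assumes inv: "involution s" and b: "is_MP_inverse s a b"
  shows "is_MP_inverse s (a * s a) (s b * b)"
proof -
  have ba: "b * a = s a * s b" and ab: "a * b = s b * s a"
    using assms by (simp_all add: is_MP_inverse_def involution_mult)
  have aba: "a * b * a = a" and bab: "b * a * b = b" and sab: "s (a * b) = a * b"
    using b by (simp_all add: is_MP_inverse_def)
  have right: "a * s a * (s b * b) = a * b"
    by (metis ba bab mult.assoc)
  have "s b * b * (a * s a) = (s b * s a) * (s b * s a)"
    by (metis ba mult.assoc)
  also have "\<dots> = a * b"
    by (metis ab aba mult.assoc)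
  finally have left: "s b * b * (a * s a) = a * b" .
  have "a * s a * (s b * b) * (a * s a) = a * b * (a * s a)"
    by (simp only: right)
  also have "\<dots> = a * s a"
    using aba by (simp only: mult.assoc[symmetric])
  finally have regular: "a * s a * (s b * b) * (a * s a) = a * s a" .
  have "s b * b * (a * s a) * (s b * b) = s b * b * (a * s a * (s b * b))"
    by (simp only: mult.assoc)
  also have "\<dots> = s b * b * (a * b)"
    by (simp only: right)
  also have "\<dots> = s b * (b * a * b)"
    by (simp only: mult.assoc)
  finally have "s b * b * (a * s a) * (s b * b) = s b * b"
    by (simp only: bab)
  with regular show ?thesis
    unfolding is_MP_inverse_def by (simp add: right left sab)
qed

lemma MP_inverse_star_absorb:
  assumes "involution s" "is_MP_inverse s a b" "e * a = a"
  shows "e * s b = s b"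
proof -
  have "s b = a * (b * s b)"
    using MP_inverse_eq_star_mult(3)[OF assms(1,2)] by (simp add: mult.assoc)
  then show ?thesis
    using assms(3) by (metis mult.assoc)
qed

lemma MP_inverse_projection_mult:
  assumes inv: "involution s" and e: "projection s e" and f: "projection s f"
    and b: "is_MP_inverse s (e * f) b"
  shows "is_MP_inverse s (e * f * e) (s b * b)" "f * (s b * b) = b"
proof -
  have star: "s (e * f) = f * e"
    using e f inv by (simp add: projection_def involution_mult)
  have "e * f * s (e * f) = e * (f * f) * e"
    by (simp only: star mult.assoc)
  then have "e * f * e = e * f * s (e * f)"
    using f by (simp add: projection_def)
  then show "is_MP_inverse s (e * f * e) (s b * b)"
    using MP_inverse_mult_star[OF inv b] by simp
  have "e * s b = s b"
    using MP_inverse_star_absorb[OF inv b, of e] e by (simp add: projection_def flip: mult.assoc)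
  then have "b = f * (e * s b) * b"
    using MP_inverse_eq_star_mult(1)[OF inv b] by (simp add: star mult.assoc)
  then show "f * (s b * b) = b"
    using \<open>e * s b = s b\<close> by (simp add: mult.assoc)
qed

lemma MP_inv_projection_mult:
  assumes "involution s" "projection s e" "projection s f" "MP_invertible s (e * f)"
  shows "MP_inv s (e * f) = f * MP_inv s (e * f * e)"
  using MP_inverse_projection_mult[OF assms(1-3) is_MP_inverse_MP_inv[OF assms(1,4)]]
    MP_inv_eqI[OF assms(1)] by simp

lemma MP_inverse_add_orthogonal:
  assumes inv: "involution s" and A: "is_MP_inverse s a A" and B: "is_MP_inverse s b B"
    and "s a * b = 0" and "b * s a = 0"
  shows "is_MP_inverse s (a + b) (A + B)"
proof -
  have "s b * a = 0" "a * s b = 0"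
    using \<open>s a * b = 0\<close> \<open>b * s a = 0\<close> inv
    by (metis involution_involutive involution_mult involution_zero)+
  txt \<open>The factorisations A = A A* a* = a* A* A pass orthogonality on to the MP inverses.\<close>
  have "A * b = A * s A * s a * b"
    using MP_inverse_eq_star_mult(2)[OF inv A] by (rule arg_cong[where f = "\<lambda>x. x * b"])
  then have Ab: "A * b = 0"
    using \<open>s a * b = 0\<close> by (simp add: mult.assoc)
  have "b * A = b * (s a * s A * A)"
    using MP_inverse_eq_star_mult(1)[OF inv A] by (rule arg_cong[where f = "\<lambda>x. b * x"])
  then have bA: "b * A = 0"
    using \<open>b * s a = 0\<close> by (simp flip: mult.assoc)
  have "B * a = B * s B * s b * a"
    using MP_inverse_eq_star_mult(2)[OF inv B] by (rule arg_cong[where f = "\<lambda>x. x * a"])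
  then have Ba: "B * a = 0"
    using \<open>s b * a = 0\<close> by (simp add: mult.assoc)
  have "a * B = a * (s b * s B * B)"
    using MP_inverse_eq_star_mult(1)[OF inv B] by (rule arg_cong[where f = "\<lambda>x. a * x"])
  then have aB: "a * B = 0"
    using \<open>a * s b = 0\<close> by (simp flip: mult.assoc)
  have A_eqs: "a * (A * a) = a" "A * (a * A) = A" "s (a * A) = a * A" "s (A * a) = A * a"
    using A by (simp_all add: is_MP_inverse_def mult.assoc)
  have B_eqs: "b * (B * b) = b" "B * (b * B) = B" "s (b * B) = b * B" "s (B * b) = B * b"
    using B by (simp_all add: is_MP_inverse_def mult.assoc)
  have sum_right: "(a + b) * (A + B) = a * A + b * B"
    and sum_left: "(A + B) * (a + b) = A * a + B * b"
    by (simp_all add: algebra_simps Ab bA Ba aB)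
  show ?thesis
    unfolding is_MP_inverse_def sum_right sum_left
    by (simp add: involution_add[OF inv] distrib_left distrib_right mult.assoc
        A_eqs B_eqs Ab bA Ba aB)
qed

lemma MP_inverse_uminus:
  "is_MP_inverse s a b \<Longrightarrow> is_MP_inverse s (- a) (- b)"
  by (simp add: is_MP_inverse_def)

theorem lemma2p3:
  fixes s :: "'a::ring_1 \<Rightarrow> 'a" and p q :: 'a
  assumes "involution s"
    and "projection s p" and "projection s q"
    and "MP_invertible s (p * (1 - q))"
    and "MP_invertible s ((1 - p) * q)"
  shows "MP_invertible s (p - q)
    \<and> MP_inv s (p - q) = (1 - q) * MP_inv s (p * (1 - q) * p) - q * MP_inv s ((1 - p) * q * (1 - p))"
proof -
  note inv = assms(1)
  let ?a = "p * (1 - q)" and ?b = "(1 - p) * q"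
  have proj_compl: "projection s (1 - p)" "projection s (1 - q)"
    using projection_complement[OF inv] assms(2,3) by blast+
  have star_a: "s ?a = (1 - q) * p"
    using inv assms(2) proj_compl(2) by (simp add: projection_def involution_mult)
  have orth: "s ?a * - ?b = 0" "- ?b * s ?a = 0"
    unfolding star_a
    using projection_mult_complement[OF assms(2)] projection_mult_complement[OF assms(3)]
    by (simp_all add: mult.assoc)
  have "is_MP_inverse s (?a + - ?b) (MP_inv s ?a + - MP_inv s ?b)"
    using MP_inverse_add_orthogonal[OF inv _ MP_inverse_uminus orth]
      is_MP_inverse_MP_inv[OF inv] assms(4,5) by blast
  moreover have "?a + - ?b = p - q"
    by (simp add: algebra_simps)
  ultimately have "is_MP_inverse s (p - q) (MP_inv s ?a - MP_inv s ?b)"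
    by simp
  then show ?thesis
    using MP_inv_eqI[OF inv] MP_inv_projection_mult[OF inv assms(2) proj_compl(2) assms(4)]
      MP_inv_projection_mult[OF inv proj_compl(1) assms(3,5)]
    unfolding MP_invertible_def by auto
qed

end
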